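(* Every kite-free chordal graph is hereditarily connected-domishold.
   Context: The kite (co-fork) is the $5$-vertex graph obtained from a diamond ($K_4$ minus an edge) by adding a new vertex adjacent to exactly one of the two degree-$2$ vertices of the diamond. A graph is chordal if it has no induced cycle of length at least $4$. A connected dominating set of a connected graph $G$ is a set $S\subseteq V(G)$ such that every vertex outside $S$ has a neighbor in $S$ and $G[S]$ is connected; $G$ is connected-domishold if there exist $w:V(G)\to\mathbb{R}_{\ge0}$, $t\in\mathbb{R}_{\ge0}$ such that for all $S\subseteq V(G)$, $\sum_{x\in S}w(x)\ge t$ iff $S$ is a connected dominating set, disconnected graphs being connected-domishold by convention. $G$ is hereditarily connected-domishold if every induced subgraph of $G$ is connected-domishold. *)

theory Defs
  imports Main "HOL.Real"
begin

text \<open>A finite simple graph is given by a finite vertex set V and a symmetric,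
irreflexive adjacency relation E (only its restriction to V matters).\<close>

definition simple_graph :: "'a set \<Rightarrow> ('a \<Rightarrow> 'a \<Rightarrow> bool) \<Rightarrow> bool" where
  "simple_graph V E \<longleftrightarrow> finite V \<and> (\<forall>x y. E x y \<longrightarrow> E y x) \<and> (\<forall>x. \<not> E x x)"

definition walk_in :: "'a set \<Rightarrow> ('a \<Rightarrow> 'a \<Rightarrow> bool) \<Rightarrow> 'a list \<Rightarrow> bool" where
  "walk_in U E p \<longleftrightarrow> p \<noteq> [] \<and> set p \<subseteq> U \<and> (\<forall>i. Suc i < length p \<longrightarrow> E (p ! i) (p ! Suc i))"

definition connected_on :: "'a set \<Rightarrow> ('a \<Rightarrow> 'a \<Rightarrow> bool) \<Rightarrow> bool" where
  "connected_on U E \<longleftrightarrow> U \<noteq> {} \<and>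
     (\<forall>x\<in>U. \<forall>y\<in>U. \<exists>p. walk_in U E p \<and> hd p = x \<and> last p = y)"

definition dominating_set :: "'a set \<Rightarrow> ('a \<Rightarrow> 'a \<Rightarrow> bool) \<Rightarrow> 'a set \<Rightarrow> bool" where
  "dominating_set V E S \<longleftrightarrow> S \<subseteq> V \<and> (\<forall>x\<in>V - S. \<exists>y\<in>S. E x y)"

definition connected_dominating_set :: "'a set \<Rightarrow> ('a \<Rightarrow> 'a \<Rightarrow> bool) \<Rightarrow> 'a set \<Rightarrow> bool" where
  "connected_dominating_set V E S \<longleftrightarrow> dominating_set V E S \<and> connected_on S E"

text \<open>Connected-domishold (disconnected graphs are connected-domishold by convention).\<close>
definition connected_domishold :: "'a set \<Rightarrow> ('a \<Rightarrow> 'a \<Rightarrow> bool) \<Rightarrow> bool" where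
  "connected_domishold V E \<longleftrightarrow>
     (connected_on V E \<longrightarrow>
       (\<exists>(w :: 'a \<Rightarrow> real) (t :: real). (\<forall>x\<in>V. w x \<ge> 0) \<and> t \<ge> 0 \<and>
          (\<forall>S. S \<subseteq> V \<longrightarrow> ((\<Sum>x\<in>S. w x) \<ge> t \<longleftrightarrow> connected_dominating_set V E S))))"

definition hereditarily_connected_domishold :: "'a set \<Rightarrow> ('a \<Rightarrow> 'a \<Rightarrow> bool) \<Rightarrow> bool" where
  "hereditarily_connected_domishold V E \<longleftrightarrow> (\<forall>U. U \<subseteq> V \<longrightarrow> connected_domishold U E)"

definition induced_cycle :: "'a set \<Rightarrow> ('a \<Rightarrow> 'a \<Rightarrow> bool) \<Rightarrow> 'a list \<Rightarrow> bool" where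
  "induced_cycle V E c \<longleftrightarrow> length c \<ge> 4 \<and> distinct c \<and> set c \<subseteq> V \<and>
     (\<forall>i<length c. \<forall>j<length c.
        E (c ! i) (c ! j) \<longleftrightarrow> (j = (i + 1) mod length c \<or> i = (j + 1) mod length c))"

definition chordal :: "'a set \<Rightarrow> ('a \<Rightarrow> 'a \<Rightarrow> bool) \<Rightarrow> bool" where
  "chordal V E \<longleftrightarrow> (\<nexists>c. induced_cycle V E c)"

text \<open>Kite: diamond on u,v (degree 3) and x,y (degree 2), plus z adjacent only to x.\<close>
definition induced_kite :: "('a \<Rightarrow> 'a \<Rightarrow> bool) \<Rightarrow> 'a \<Rightarrow> 'a \<Rightarrow> 'a \<Rightarrow> 'a \<Rightarrow> 'a \<Rightarrow> bool" where
  "induced_kite E u v x y z \<longleftrightarrow> distinct [u, v, x, y, z] \<and>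
     E u v \<and> E u x \<and> E u y \<and> E v x \<and> E v y \<and> \<not> E x y \<and>
     E z x \<and> \<not> E z y \<and> \<not> E z u \<and> \<not> E z v"

definition kite_free :: "'a set \<Rightarrow> ('a \<Rightarrow> 'a \<Rightarrow> bool) \<Rightarrow> bool" where
  "kite_free V E \<longleftrightarrow> (\<forall>u\<in>V. \<forall>v\<in>V. \<forall>x\<in>V. \<forall>y\<in>V. \<forall>z\<in>V. \<not> induced_kite E u v x y z)"

end

theory Submission
  imports Defs
begin

text \<open>A graph with two non-adjacent vertices is connected-domishold as soon as any
  two of its minimal cutsets \<open>C\<close>, \<open>D\<close> satisfy \<open>|D - C| \<le> 1\<close>: weight each vertex by the number
  of minimal cutsets containing it and take the number of minimal cutsets as threshold. A set
  is a connected dominating set iff it meets every minimal cutset, and a set missing some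
  minimal cutset \<open>C\<close> meets each other one in at most one vertex, so it stays below the threshold.

  In a chordal graph minimal cutsets are cliques and all components of their complement are full.
  If \<open>D - C\<close> contained two vertices \<open>d\<^sub>1, d\<^sub>2\<close>, pick \<open>c \<in> C - D\<close>; the component of \<open>V - D\<close>
  containing \<open>c\<close> holds an induced path from a common neighbour of \<open>d\<^sub>1, d\<^sub>2\<close> to a vertex
  adjacent to neither, while another component supplies a third common neighbour \<open>m\<close>.
  Where \<open>d\<^sub>1, d\<^sub>2\<close> first stop being adjacent to the path, the triangle \<open>d\<^sub>1 d\<^sub>2 m\<close> and the
  path form a kite or an induced 4-cycle. Both properties pass to induced subgraphs.\<close>

lemma walk_in_Nil [simp]: "\<not> walk_in U E []"
  by (simp add: walk_in_def)

lemma walk_in_single [simp]: "walk_in U E [x] \<longleftrightarrow> x \<in> U"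
  by (simp add: walk_in_def)

lemma walk_in_Cons_Cons:
  "walk_in U E (x # y # xs) \<longleftrightarrow> x \<in> U \<and> E x y \<and> walk_in U E (y # xs)"
  by (auto simp: walk_in_def nth_Cons split: nat.splits)

lemma walk_in_nth_mem: "walk_in U E p \<Longrightarrow> i < length p \<Longrightarrow> p ! i \<in> U"
  by (auto simp: walk_in_def)

lemma walk_in_edge: "walk_in U E p \<Longrightarrow> Suc i < length p \<Longrightarrow> E (p ! i) (p ! Suc i)"
  by (simp add: walk_in_def)

lemma walk_in_subset: "walk_in U E p \<Longrightarrow> set p \<subseteq> W \<Longrightarrow> walk_in W E p"
  by (auto simp: walk_in_def)

lemma walk_in_mono: "walk_in U E p \<Longrightarrow> U \<subseteq> W \<Longrightarrow> walk_in W E p"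
  by (auto simp: walk_in_def)

lemma walk_in_take: "walk_in U E p \<Longrightarrow> 0 < n \<Longrightarrow> walk_in U E (take n p)"
  unfolding walk_in_def by (auto dest: in_set_takeD)

lemma walk_in_drop: "walk_in U E p \<Longrightarrow> n < length p \<Longrightarrow> walk_in U E (drop n p)"
  unfolding walk_in_def by (auto dest: in_set_dropD simp: add.commute)

lemma walk_in_append:
  assumes "walk_in U E p" "walk_in U E q" "E (last p) (hd q)"
  shows "walk_in U E (p @ q)"
  using assms
proof (induction p rule: induct_list012)
  case (2 x)
  then show ?case by (cases q) (auto simp: walk_in_Cons_Cons)
qed (auto simp: walk_in_Cons_Cons)

lemma last_take_Suc: "i < length p \<Longrightarrow> last (take (Suc i) p) = p ! i"
  by (simp add: take_Suc_conv_app_nth)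

lemma walk_in_shortcut:
  assumes p: "walk_in U E p" and ij: "i < j" "j < length p" and e: "E (p ! i) (p ! j)"
  shows "walk_in U E (take (Suc i) p @ drop j p)"
  by (rule walk_in_append) (use walk_in_take[OF p] walk_in_drop[OF p] ij e in
      \<open>auto simp: last_take_Suc hd_drop_conv_nth\<close>)

lemma walk_in_leaves:
  assumes "walk_in U E p" "hd p \<in> A" "last p \<notin> A"
  shows "\<exists>i. Suc i < length p \<and> p ! i \<in> A \<and> p ! Suc i \<notin> A"
  using assms
proof (induction p rule: induct_list012)
  case (3 x y zs)
  show ?case
  proof (cases "y \<in> A")
    case True
    then obtain i where "Suc i < length (y # zs)" "(y # zs) ! i \<in> A" "(y # zs) ! Suc i \<notin> A"
      using 3 by (auto simp: walk_in_Cons_Cons)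
    then show ?thesis by (intro exI[of _ "Suc i"]) auto
  next
    case False
    then show ?thesis using 3(4) by (intro exI[of _ 0]) auto
  qed
qed simp_all

locale simple_adjacency =
  fixes E :: "'a \<Rightarrow> 'a \<Rightarrow> bool"
  assumes sym: "E x y \<Longrightarrow> E y x" and irrefl: "\<not> E x x"
begin

lemma sym_iff: "E x y \<longleftrightarrow> E y x"
  using sym by blast

lemma walk_in_rev: "walk_in U E p \<Longrightarrow> walk_in U E (rev p)"
  unfolding walk_in_def
proof (intro conjI allI impI)
  fix i
  assume p: "p \<noteq> [] \<and> set p \<subseteq> U \<and> (\<forall>i. Suc i < length p \<longrightarrow> E (p ! i) (p ! Suc i))"
    and i: "Suc i < length (rev p)"
  then have "E (p ! (length p - Suc (Suc i))) (p ! Suc (length p - Suc (Suc i)))"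
    by auto
  moreover have "Suc (length p - Suc (Suc i)) = length p - Suc i"
    using i by simp
  ultimately show "E (rev p ! i) (rev p ! Suc i)"
    using i by (simp add: rev_nth sym_iff)
qed auto

definition reachable :: "'a set \<Rightarrow> 'a \<Rightarrow> 'a \<Rightarrow> bool" where
  "reachable U a b \<longleftrightarrow> (\<exists>p. walk_in U E p \<and> hd p = a \<and> last p = b)"

lemma reachable_refl: "a \<in> U \<Longrightarrow> reachable U a a"
  unfolding reachable_def by (rule exI[of _ "[a]"]) simp

lemma reachable_edge: "a \<in> U \<Longrightarrow> b \<in> U \<Longrightarrow> E a b \<Longrightarrow> reachable U a b"
  unfolding reachable_def by (rule exI[of _ "[a, b]"]) (simp add: walk_in_Cons_Cons)

lemma reachable_sym: "reachable U a b \<Longrightarrow> reachable U b a"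
  unfolding reachable_def by (metis walk_in_rev hd_rev last_rev)

lemma reachable_trans:
  assumes "reachable U a b" "reachable U b c"
  shows "reachable U a c"
proof -
  obtain p where p: "walk_in U E p" "hd p = a" "last p = b"
    using assms(1) reachable_def by auto
  obtain q where q: "walk_in U E q" "hd q = b" "last q = c"
    using assms(2) reachable_def by auto
  show ?thesis
  proof (cases "tl q = []")
    case True
    then have "c = b"
      using q by (cases q) auto
    then show ?thesis
      using p reachable_def by blast
  next
    case False
    have q_split: "q = b # tl q"
      using q by (cases q) auto
    then have "walk_in U E (tl q)" "E b (hd (tl q))"
      using q(1) False by (metis list.collapse walk_in_Cons_Cons)+
    then have "walk_in U E (p @ tl q)"
      using p by (intro walk_in_append) simp_all
    moreover have "hd (p @ tl q) = a" "last (p @ tl q) = c"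
      using p q False q_split walk_in_Nil by (metis hd_append2 last_ConsR last_appendR)+
    ultimately show ?thesis
      unfolding reachable_def by blast
  qed
qed

lemma reachable_in: "reachable U a b \<Longrightarrow> a \<in> U \<and> b \<in> U"
  unfolding reachable_def walk_in_def by (auto intro: hd_in_set last_in_set)

lemma reachable_mono: "reachable U a b \<Longrightarrow> U \<subseteq> W \<Longrightarrow> reachable W a b"
  unfolding reachable_def using walk_in_mono by blast

lemma walk_in_reachable_nth:
  assumes "walk_in U E p" "i < length p"
  shows "reachable U (hd p) (p ! i)"
  unfolding reachable_def
  by (rule exI[of _ "take (Suc i) p"])
    (use assms walk_in_take in \<open>auto simp: last_take_Suc\<close>)

lemma reachable_within_component:
  assumes "reachable U a b" "\<And>x. reachable U a x \<Longrightarrow> x \<in> W"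
  shows "reachable W a b"
proof -
  obtain p where p: "walk_in U E p" "hd p = a" "last p = b"
    using assms(1) reachable_def by auto
  have "set p \<subseteq> W"
    using walk_in_reachable_nth[OF p(1)] p(2) assms(2) by (auto simp: in_set_conv_nth)
  then show ?thesis
    using p walk_in_subset reachable_def by blast
qed

lemma reachable_in_component:
  assumes "reachable U b x" "reachable U b y"
  shows "reachable {z. reachable U b z} x y"
proof (rule reachable_within_component)
  show "reachable U x y"
    using reachable_trans[OF reachable_sym[OF assms(1)] assms(2)] .
  show "z \<in> {z. reachable U b z}" if "reachable U x z" for z
    using reachable_trans[OF assms(1) that] by simp
qed

lemma reachable_step:
  assumes "reachable U b x" "y \<in> U" "E x y"
  shows "reachable U b y"
proof -
  have "x \<in> U"
    using reachable_in[OF assms(1)] by blast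
  then show ?thesis
    using reachable_trans[OF assms(1) reachable_edge[OF _ assms(2,3)]] by blast
qed

lemma unreachable_components_apart:
  assumes "\<not> reachable U a b" "reachable U a x" "reachable U b y"
  shows "x \<noteq> y \<and> \<not> E x y"
proof -
  have "\<not> reachable U a y"
    using assms(1) reachable_trans[OF _ reachable_sym[OF assms(3)]] by blast
  then show ?thesis
    using assms(2) reachable_step[OF assms(2)] reachable_in[OF assms(3)] by blast
qed

lemma reachable_has_neighbour:
  assumes "reachable U x y" "x \<noteq> y"
  obtains n where "n \<in> U" "E x n"
proof -
  obtain p where p: "walk_in U E p" "hd p = x" "last p = y"
    using assms(1) reachable_def by auto
  then obtain i where i: "Suc i < length p" "p ! i \<in> {x}" "p ! Suc i \<notin> {x}"
    using walk_in_leaves[OF p(1), of "{x}"] assms(2) by auto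
  show ?thesis
  proof (rule that)
    show "p ! Suc i \<in> U"
      using walk_in_nth_mem[OF p(1) i(1)] .
    show "E x (p ! Suc i)"
      using walk_in_edge[OF p(1) i(1)] i(2) by simp
  qed
qed

section \<open>Induced paths in chordal graphs\<close>

definition induced_path :: "'a set \<Rightarrow> 'a list \<Rightarrow> bool" where
  "induced_path U p \<longleftrightarrow> walk_in U E p \<and> distinct p \<and>
     (\<forall>i j. Suc i < j \<and> j < length p \<longrightarrow> \<not> E (p ! i) (p ! j))"

lemma induced_path_take:
  assumes "induced_path U p" "0 < n"
  shows "induced_path U (take n p)"
  using assms walk_in_take unfolding induced_path_def by auto

lemma induced_path_nth_mem: "induced_path U p \<Longrightarrow> i < length p \<Longrightarrow> p ! i \<in> U"
  unfolding induced_path_def using walk_in_nth_mem by blast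

lemma induced_path_nth_eq_iff:
  "induced_path U p \<Longrightarrow> i < length p \<Longrightarrow> j < length p \<Longrightarrow> p ! i = p ! j \<longleftrightarrow> i = j"
  unfolding induced_path_def by (simp add: nth_eq_iff_index_eq)

lemma induced_path_mono: "induced_path U p \<Longrightarrow> U \<subseteq> W \<Longrightarrow> induced_path W p"
  unfolding induced_path_def using walk_in_mono by blast

lemma induced_path_adjacent_iff:
  assumes "induced_path U p" "i < length p" "j < length p"
  shows "E (p ! i) (p ! j) \<longleftrightarrow> j = Suc i \<or> i = Suc j"
proof -
  have "\<not> E (p ! i) (p ! j)" if "j \<noteq> Suc i" "i \<noteq> Suc j"
  proof (cases i j rule: linorder_cases)
    case less
    then show ?thesis using that assms unfolding induced_path_def by (auto simp: Suc_lessI)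
  next
    case greater
    then show ?thesis using that assms sym_iff unfolding induced_path_def by (metis Suc_lessI)
  qed (simp add: irrefl)
  then show ?thesis
    using assms walk_in_edge sym_iff unfolding induced_path_def by auto
qed

lemma shortest_walk_induced_path:
  assumes "walk_in U E p" "hd p \<in> P" "last p \<in> Q"
  obtains q where "induced_path U q" "hd q \<in> P" "last q \<in> Q"
    "\<And>i. 0 < i \<Longrightarrow> i < length q \<Longrightarrow> q ! i \<notin> P"
    "\<And>i. i < length q - 1 \<Longrightarrow> q ! i \<notin> Q"
proof -
  let ?G = "\<lambda>q. walk_in U E q \<and> hd q \<in> P \<and> last q \<in> Q"
  obtain q where q: "?G q" and shortest: "\<And>q'. ?G q' \<Longrightarrow> length q \<le> length q'"
    using ex_has_least_nat[of ?G p length] assms by blast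
  have w: "walk_in U E q" and ne: "q \<noteq> []"
    using q by auto
  have shortcut: "i < j \<Longrightarrow> j < length q \<Longrightarrow> E (q ! i) (q ! j) \<Longrightarrow> j = Suc i" for i j
  proof (rule ccontr)
    assume ij: "i < j" "j < length q" "E (q ! i) (q ! j)" "j \<noteq> Suc i"
    let ?q = "take (Suc i) q @ drop j q"
    have "?G ?q"
      using q walk_in_shortcut[OF w ij(1-3)] ij ne by simp
    then show False
      using shortest[of ?q] ij by simp
  qed
  have "distinct q"
  proof (rule ccontr)
    assume "\<not> distinct q"
    then obtain i j where ij: "i < j" "j < length q" "q ! i = q ! j"
      by (metis distinct_conv_nth linorder_neqE_nat)
    show False
    proof (cases "Suc j = length q")
      case True
      then have "last q = q ! j"
        by (metis diff_Suc_1 last_conv_nth ne)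
      then have "?G (take (Suc i) q)"
        using q walk_in_take[OF w] ij by (simp add: last_take_Suc)
      then show False
        using shortest[of "take (Suc i) q"] ij by simp
    next
      case False
      then show False
        using shortcut[of i "Suc j"] walk_in_edge[OF w, of j] ij by simp
    qed
  qed
  moreover have "\<not> E (q ! i) (q ! j)" if "Suc i < j" "j < length q" for i j
    using shortcut[of i j] that by auto
  moreover have "q ! i \<notin> P" if "0 < i" "i < length q" for i
  proof
    assume "q ! i \<in> P"
    then have "?G (drop i q)"
      using q walk_in_drop[OF w] that by (simp add: hd_drop_conv_nth)
    then show False
      using shortest[of "drop i q"] that by simp
  qed
  moreover have "q ! i \<notin> Q" if "i < length q - 1" for i
  proof
    assume "q ! i \<in> Q"
    then have "?G (take (Suc i) q)"
      using q walk_in_take[OF w] that by (simp add: last_take_Suc)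
    then show False
      using shortest[of "take (Suc i) q"] that by simp
  qed
  ultimately show ?thesis
    using that q unfolding induced_path_def by blast
qed

lemma induced_cycle_Cons:
  assumes p: "induced_path V p" "length p \<ge> 3"
    and u: "u \<in> V" "u \<notin> set p"
    and u_adj: "\<And>i. i < length p \<Longrightarrow> E u (p ! i) \<longleftrightarrow> i = 0 \<or> i = length p - 1"
  shows "induced_cycle V E (u # p)"
  unfolding induced_cycle_def
proof (intro conjI allI impI)
  show "set (u # p) \<subseteq> V"
    using p u unfolding induced_path_def walk_in_def by auto
  fix i j
  assume i: "i < length (u # p)" and j: "j < length (u # p)"
  have mod_Suc: "(k + 1) mod length (u # p) = (if k = length p then 0 else Suc k)"
    if "k < length (u # p)" for k
    using that by auto
  show "E ((u # p) ! i) ((u # p) ! j) \<longleftrightarrow>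
      j = (i + 1) mod length (u # p) \<or> i = (j + 1) mod length (u # p)"
    unfolding mod_Suc[OF i] mod_Suc[OF j]
    using i j p(2) irrefl u_adj sym_iff[of u] induced_path_adjacent_iff[OF p(1)]
    by (cases i; cases j) auto
qed (use p u in \<open>auto simp: induced_path_def\<close>)

text \<open>If no vertex of \<open>P\<close> equals or is adjacent to one of \<open>Q\<close>, a shortest walk from \<open>P\<close> to \<open>Q\<close>
  is an induced path with at least three vertices of which only the ends are adjacent to \<open>u\<close>,
  so together with \<open>u\<close> it is an induced cycle.\<close>

lemma chordal_link_neighbours:
  assumes ch: "chordal V E" and W: "W \<subseteq> V" and u: "u \<in> V" "u \<notin> W"
    and p: "walk_in W E p" "hd p \<in> P" "last p \<in> Q"
    and nbrs: "\<And>x. x \<in> P \<union> Q \<Longrightarrow> E u x"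
    and covers: "\<And>x. x \<in> W \<Longrightarrow> E u x \<Longrightarrow> x \<in> P \<union> Q"
  shows "\<exists>x\<in>P. \<exists>y\<in>Q. x = y \<or> E x y"
proof -
  obtain q where q: "induced_path W q" "hd q \<in> P" "last q \<in> Q"
    and P_start: "\<And>i. 0 < i \<Longrightarrow> i < length q \<Longrightarrow> q ! i \<notin> P"
    and Q_end: "\<And>i. i < length q - 1 \<Longrightarrow> q ! i \<notin> Q"
    using shortest_walk_induced_path[OF p] by blast
  have w: "walk_in W E q" and ne: "q \<noteq> []"
    using q(1) by (auto simp: induced_path_def)
  have hd_last: "hd q = q ! 0" "last q = q ! (length q - 1)"
    using ne by (simp_all add: hd_conv_nth last_conv_nth)
  show ?thesis
  proof (cases "length q \<ge> 3")
    case True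
    have "induced_cycle V E (u # q)"
    proof (rule induced_cycle_Cons)
      show "induced_path V q"
        using q(1) W walk_in_mono[of W E q V] unfolding induced_path_def by simp
      show "u \<notin> set q"
        using u(2) w by (auto simp: walk_in_def)
      show "E u (q ! i) \<longleftrightarrow> i = 0 \<or> i = length q - 1" if i: "i < length q" for i
      proof
        assume "E u (q ! i)"
        then have "q ! i \<in> P \<union> Q"
          using covers walk_in_nth_mem[OF w i] by blast
        moreover have "q ! i \<notin> P \<union> Q" if "i \<noteq> 0" "i \<noteq> length q - 1"
          using P_start[of i] Q_end[of i] i that by simp
        ultimately show "i = 0 \<or> i = length q - 1"
          by blast
      next
        assume "i = 0 \<or> i = length q - 1"
        then show "E u (q ! i)"
          using nbrs q(2,3) hd_last by auto
      qed
    qed (use True u in simp_all)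
    then show ?thesis
      using ch chordal_def by blast
  next
    case False
    moreover have "length q \<noteq> 0"
      using ne by simp
    ultimately consider "length q = 1" | "length q = 2"
      by linarith
    then show ?thesis
    proof cases
      case 1
      then show ?thesis using q(2,3) hd_last by auto
    next
      case 2
      then show ?thesis using q(2,3) hd_last walk_in_edge[OF w, of 0] by auto
    qed
  qed
qed

section \<open>Minimal cutsets of chordal graphs\<close>

definition cutset :: "'a set \<Rightarrow> 'a set \<Rightarrow> bool" where
  "cutset V X \<longleftrightarrow> X \<subseteq> V \<and> (\<exists>a\<in>V - X. \<exists>b\<in>V - X. \<not> reachable (V - X) a b)"

definition minimal_cutset :: "'a set \<Rightarrow> 'a set \<Rightarrow> bool" where
  "minimal_cutset V X \<longleftrightarrow> cutset V X \<and> (\<forall>Y. Y \<subset> X \<longrightarrow> \<not> cutset V Y)"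

lemma minimal_cutset_cutset: "minimal_cutset V X \<Longrightarrow> cutset V X"
  by (simp add: minimal_cutset_def)

lemma cutset_subset: "cutset V X \<Longrightarrow> X \<subseteq> V"
  by (simp add: cutset_def)

lemma cutset_unreachable_from:
  assumes "cutset V X" "a \<in> V - X"
  obtains b where "b \<in> V - X" "\<not> reachable (V - X) a b"
proof -
  obtain a' b' where ab': "a' \<in> V - X" "b' \<in> V - X" "\<not> reachable (V - X) a' b'"
    using assms(1) unfolding cutset_def by blast
  show ?thesis
  proof (cases "reachable (V - X) a a'")
    case True
    then have "\<not> reachable (V - X) a b'"
      using ab'(3) reachable_trans[OF reachable_sym[OF True]] by blast
    then show ?thesis
      using that ab'(2) by blast
  qed (use that ab'(1) in blast)
qed

lemma minimal_cutset_full_component: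
  assumes mc: "minimal_cutset V X" and v: "v \<in> X" and a: "a \<in> V - X"
  obtains n where "E v n" "reachable (V - X) a n"
proof -
  have "cutset V X"
    using mc by (rule minimal_cutset_cutset)
  then have XV: "X \<subseteq> V"
    by (rule cutset_subset)
  obtain b where b: "b \<in> V - X" "\<not> reachable (V - X) a b"
    using cutset_unreachable_from[OF \<open>cutset V X\<close> a] by blast
  have "X - {v} \<subset> X"
    using v by blast
  then have "\<not> cutset V (X - {v})"
    using mc unfolding minimal_cutset_def by blast
  moreover have "a \<in> V - (X - {v})" "b \<in> V - (X - {v})"
    using a b by auto
  ultimately have "reachable (V - (X - {v})) a b"
    unfolding cutset_def using XV by blast
  then obtain p where p: "walk_in (V - (X - {v})) E p" "hd p = a" "last p = b"
    using reachable_def by auto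
  let ?A = "{x. reachable (V - X) a x}"
  have "hd p \<in> ?A"
    using p(2) a reachable_refl by simp
  moreover have "last p \<notin> ?A"
    using p(3) b(2) by simp
  ultimately
  obtain i where i: "Suc i < length p" "p ! i \<in> ?A" "p ! Suc i \<notin> ?A"
    using walk_in_leaves[OF p(1)] by blast
  have e: "E (p ! i) (p ! Suc i)"
    using walk_in_edge[OF p(1) i(1)] .
  have "p ! Suc i = v"
  proof (rule ccontr)
    assume "p ! Suc i \<noteq> v"
    then have "p ! Suc i \<in> V - X"
      using walk_in_nth_mem[OF p(1) i(1)] by blast
    then show False
      using reachable_step[of "V - X" a "p ! i"] i(2,3) e by simp
  qed
  show ?thesis
  proof (rule that)
    show "E v (p ! i)"
      using sym[OF e] \<open>p ! Suc i = v\<close> by simp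
    show "reachable (V - X) a (p ! i)"
      using i(2) by simp
  qed
qed

lemma chordal_minimal_cutset_clique:
  assumes ch: "chordal V E" and mc: "minimal_cutset V X"
    and uv: "u \<in> X" "v \<in> X" "u \<noteq> v"
  shows "E u v"
proof (rule ccontr)
  assume nuv: "\<not> E u v"
  have XV: "X \<subseteq> V"
    using mc minimal_cutset_cutset cutset_subset by blast
  obtain a b where ab: "a \<in> V - X" "b \<in> V - X" "\<not> reachable (V - X) a b"
    using minimal_cutset_cutset[OF mc] unfolding cutset_def by blast
  define A where "A = {x. reachable (V - X) a x}"
  define B where "B = {x. reachable (V - X) b x}"
  have AB: "A \<subseteq> V - X" "B \<subseteq> V - X"
    using reachable_in A_def B_def by auto
  have apart: "x \<noteq> y \<and> \<not> E x y" if "x \<in> A" "y \<in> B" for x y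
    using unreachable_components_apart[OF ab(3)] that unfolding A_def B_def by blast
  obtain nua where nua: "E u nua" "reachable (V - X) a nua"
    using minimal_cutset_full_component[OF mc uv(1) ab(1)] by blast
  obtain nub where nub: "E u nub" "reachable (V - X) b nub"
    using minimal_cutset_full_component[OF mc uv(1) ab(2)] by blast
  obtain nva where nva: "E v nva" "reachable (V - X) a nva"
    using minimal_cutset_full_component[OF mc uv(2) ab(1)] by blast
  obtain nvb where nvb: "E v nvb" "reachable (V - X) b nvb"
    using minimal_cutset_full_component[OF mc uv(2) ab(2)] by blast
  have "reachable A nua nva"
    unfolding A_def by (rule reachable_in_component[OF nua(2) nva(2)])
  then obtain p1 where p1: "walk_in A E p1" "hd p1 = nua" "last p1 = nva"
    using reachable_def by auto
  have "reachable B nvb nub"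
    unfolding B_def by (rule reachable_in_component[OF nvb(2) nub(2)])
  then obtain p2 where p2: "walk_in B E p2" "hd p2 = nvb" "last p2 = nub"
    using reachable_def by auto
  let ?W = "A \<union> B \<union> {v}"
  have w1: "walk_in ?W E p1" and w2: "walk_in ?W E p2"
    by (rule walk_in_mono[OF p1(1)], blast, rule walk_in_mono[OF p2(1)], blast)
  have "walk_in ?W E ([v] @ p2)"
    by (rule walk_in_append) (use w2 p2(2) nvb(1) in simp_all)
  then have p: "walk_in ?W E (p1 @ [v] @ p2)"
    by (rule walk_in_append[OF w1]) (use p1(3) sym[OF nva(1)] in simp)
  have "\<exists>x\<in>{x \<in> A. E u x}. \<exists>y\<in>{x \<in> B. E u x}. x = y \<or> E x y"
  proof (rule chordal_link_neighbours[OF ch _ _ _ p])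
    show "?W \<subseteq> V" "u \<in> V" "u \<notin> ?W"
      using AB XV uv by auto
    have "p1 \<noteq> []" "p2 \<noteq> []"
      using p1(1) p2(1) walk_in_def by blast+
    then show "hd (p1 @ [v] @ p2) \<in> {x \<in> A. E u x}"
        and "last (p1 @ [v] @ p2) \<in> {x \<in> B. E u x}"
      using p1(2) p2(3) nua nub unfolding A_def B_def by simp_all
    show "E u x" if "x \<in> {x \<in> A. E u x} \<union> {x \<in> B. E u x}" for x
      using that by blast
    show "x \<in> {x \<in> A. E u x} \<union> {x \<in> B. E u x}" if "x \<in> ?W" "E u x" for x
      using that nuv by blast
  qed
  then show False
    using apart by blast
qed

lemma chordal_minimal_cutset_common_neighbour:
  assumes ch: "chordal V E" and mc: "minimal_cutset V D"
    and d: "d1 \<in> D" "d2 \<in> D" "d1 \<noteq> d2" and b: "b \<in> V - D"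
  obtains x where "reachable (V - D) b x" "E d1 x" "E x d2"
proof -
  have DV: "D \<subseteq> V"
    using mc minimal_cutset_cutset cutset_subset by blast
  define A where "A = {x. reachable (V - D) b x}"
  have AV: "A \<subseteq> V - D"
    using reachable_in unfolding A_def by blast
  obtain n1 where n1: "E d1 n1" "reachable (V - D) b n1"
    using minimal_cutset_full_component[OF mc d(1) b] by blast
  obtain n2 where n2: "E d2 n2" "reachable (V - D) b n2"
    using minimal_cutset_full_component[OF mc d(2) b] by blast
  have "reachable A n1 n2"
    unfolding A_def by (rule reachable_in_component[OF n1(2) n2(2)])
  then obtain p where p: "walk_in A E p" "hd p = n1" "last p = n2"
    using reachable_def by auto
  have "walk_in (A \<union> {d2}) E p"
    by (rule walk_in_mono[OF p(1)]) blast
  then have w: "walk_in (A \<union> {d2}) E (p @ [d2])"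
    by (rule walk_in_append) (use p(3) sym[OF n2(1)] in simp_all)
  have "\<exists>x\<in>{x \<in> A. E d1 x}. \<exists>y\<in>{d2}. x = y \<or> E x y"
  proof (rule chordal_link_neighbours[OF ch _ _ _ w])
    show "A \<union> {d2} \<subseteq> V" "d1 \<in> V" "d1 \<notin> A \<union> {d2}"
      using AV DV d by auto
    have "p \<noteq> []"
      using p(1) walk_in_def by blast
    then show "hd (p @ [d2]) \<in> {x \<in> A. E d1 x}"
      using p(2) n1 unfolding A_def by simp
    show "E d1 x" if "x \<in> {x \<in> A. E d1 x} \<union> {d2}" for x
      using that chordal_minimal_cutset_clique[OF ch mc d] by blast
  qed auto
  then obtain x where "x \<in> A" "E d1 x" "x = d2 \<or> E x d2"
    by blast
  moreover have "x \<noteq> d2"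
    using \<open>x \<in> A\<close> AV d(2) by blast
  ultimately show ?thesis
    using that unfolding A_def by blast
qed

section \<open>Kites over induced paths\<close>

lemma first_failing_index:
  assumes "P (hd xs)" "\<not> P (last xs)" "xs \<noteq> []"
  obtains f where "0 < f" "f < length xs" "\<forall>i<f. P (xs ! i)" "\<not> P (xs ! f)"
proof -
  let ?F = "\<lambda>i. i < length xs \<and> \<not> P (xs ! i)"
  have "?F (length xs - 1)"
    using assms(2,3) by (simp add: last_conv_nth)
  then have F: "?F (LEAST i. ?F i)"
    by (rule LeastI)
  moreover have "\<forall>i<(LEAST i. ?F i). P (xs ! i)"
    using not_less_Least F by fastforce
  moreover have "(LEAST i. ?F i) \<noteq> 0"
    using F assms(1,3) by (metis hd_conv_nth)
  ultimately show ?thesis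
    using that by blast
qed

lemma kite_freeD:
  "kite_free V E \<Longrightarrow> {u, v, x, y, z} \<subseteq> V \<Longrightarrow> \<not> induced_kite E u v x y z"
  unfolding kite_free_def by simp

lemma kite_of_neighbour_run:
  assumes z: "induced_path V z" "k + 3 < length z"
    and d: "d \<notin> set z" "E d (z ! k)" "E d (z ! (k + 1))" "E d (z ! (k + 2))" "\<not> E d (z ! (k + 3))"
  shows "induced_kite E d (z ! (k + 1)) (z ! (k + 2)) (z ! k) (z ! (k + 3))"
proof -
  have "d \<noteq> z ! i" if "i < length z" for i
    using d(1) that nth_mem by blast
  then show ?thesis
    unfolding induced_kite_def
    using z d induced_path_adjacent_iff[OF z(1)] induced_path_nth_eq_iff[OF z(1)] sym_iff
    by (simp add: numeral_eq_Suc)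
qed

lemma kite_or_hole_of_neighbours:
  assumes ch: "chordal V E" and kf: "kite_free V E"
    and z: "induced_path V z" "2 < length z"
    and d: "d1 \<in> V - set z" "d2 \<in> V - set z" "E d1 d2"
    and d1: "E d1 (z ! 0)" "E d1 (z ! 1)" "\<not> E d1 (z ! 2)"
    and d2: "E d2 (z ! 0)" "\<not> E d2 (z ! 1)"
  shows False
proof (cases "E d2 (z ! 2)")
  case True
  have "induced_cycle V E (d2 # take 3 z)"
  proof (rule induced_cycle_Cons)
    show "induced_path V (take 3 z)"
      using induced_path_take[OF z(1)] by simp
    show "d2 \<notin> set (take 3 z)"
      using d(2) in_set_takeD by fastforce
    show "E d2 (take 3 z ! i) \<longleftrightarrow> i = 0 \<or> i = length (take 3 z) - 1"
      if "i < length (take 3 z)" for i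
      using that z(2) d2 True by (auto simp: less_Suc_eq numeral_eq_Suc)
  qed (use z(2) d(2) in auto)
  then show False
    using ch chordal_def by blast
next
  case False
  have "z \<noteq> []"
    using z(2) by auto
  have z_mem: "z ! i \<in> V - {d1, d2}" if "i \<le> 2" for i
    using induced_path_nth_mem[OF z(1)] d nth_mem that z(2) by force
  have z_adj: "E (z ! 0) (z ! 1)" "E (z ! 1) (z ! 2)" "\<not> E (z ! 0) (z ! 2)"
    using induced_path_adjacent_iff[OF z(1), of 0 1] induced_path_adjacent_iff[OF z(1), of 1 2]
      induced_path_adjacent_iff[OF z(1), of 0 2] z(2) \<open>z \<noteq> []\<close> by simp_all
  have z_ne: "z ! 0 \<noteq> z ! 1" "z ! 0 \<noteq> z ! 2" "z ! 1 \<noteq> z ! 2"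
    using induced_path_nth_eq_iff[OF z(1), of 0 1] induced_path_nth_eq_iff[OF z(1), of 0 2]
      induced_path_nth_eq_iff[OF z(1), of 1 2] z(2) \<open>z \<noteq> []\<close> by simp_all
  have "induced_kite E d1 (z ! 0) (z ! 1) d2 (z ! 2)"
    unfolding induced_kite_def
    using z_mem[of 0] z_mem[of 1] z_mem[of 2] z_adj z_ne d d1 d2 False irrefl sym_iff
    by auto
  moreover have "{d1, z ! 0, z ! 1, d2, z ! 2} \<subseteq> V"
    using z_mem[of 0] z_mem[of 1] z_mem[of 2] d by auto
  ultimately show False
    using kite_freeD[OF kf] by blast
qed

lemma triangle_over_induced_path_ordered:
  assumes ch: "chordal V E" and kf: "kite_free V E" and z: "induced_path V z"
    and d: "d1 \<in> V - set z" "d2 \<in> V - set z" "m \<in> V - set z" "E d1 d2" "E m d1" "E m d2"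
    and m: "\<forall>x\<in>set z. \<not> E m x"
    and f1: "0 < f1" "f1 < length z" "\<forall>i<f1. E d1 (z ! i)" "\<not> E d1 (z ! f1)"
    and f2: "0 < f2" "f2 < length z" "\<forall>i<f2. E d2 (z ! i)" "\<not> E d2 (z ! f2)"
    and le: "f2 \<le> f1"
  shows False
proof -
  have z_mem: "z ! i \<in> V - {d1, d2, m}" if "i < length z" for i
    using induced_path_nth_mem[OF z(1) that] nth_mem[OF that] d by auto
  consider "3 \<le> f1" | "f1 = f2" | "f2 = 1" "f1 = 2"
    using f1(1) f2(1) le by linarith
  then show False
  proof cases
    case 1
    define k where "k = f1 - 3"
    have k: "f1 = k + 3"
      using 1 k_def by simp
    have "induced_kite E d1 (z ! (k + 1)) (z ! (k + 2)) (z ! k) (z ! (k + 3))"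
      by (rule kite_of_neighbour_run[OF z]) (use f1 d k in auto)
    moreover have "{d1, z ! (k + 1), z ! (k + 2), z ! k, z ! (k + 3)} \<subseteq> V"
      using z_mem f1(2) k d(1) by auto
    ultimately show False
      using kite_freeD[OF kf] by blast
  next
    case 2
    have adj: "E (z ! f1) (z ! (f1 - 1))"
      using induced_path_adjacent_iff[OF z, of f1 "f1 - 1"] f1(1,2) by simp
    have ne: "z ! f1 \<noteq> z ! (f1 - 1)"
      using induced_path_nth_eq_iff[OF z, of f1 "f1 - 1"] f1(1,2) by simp
    have "E d1 (z ! (f1 - 1))" "E d2 (z ! (f1 - 1))"
      using f1(1,3) f2(3) 2 by simp_all
    moreover have "\<not> E (z ! (f1 - 1)) m" "\<not> E (z ! f1) m"
      using m f1(1,2) sym_iff[of m] by simp_all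
    moreover have "\<not> E (z ! f1) d1" "\<not> E (z ! f1) d2"
      using f1(4) f2(4) 2 sym_iff[of "z ! f1"] by simp_all
    moreover have "d1 \<noteq> d2" "d1 \<noteq> m" "d2 \<noteq> m"
      using d(4-6) irrefl by auto
    ultimately have "induced_kite E d1 d2 (z ! (f1 - 1)) m (z ! f1)"
      unfolding induced_kite_def
      using z_mem[of f1] z_mem[of "f1 - 1"] f1(2) d(4-6) sym[OF d(5)] sym[OF d(6)] adj ne
      by auto
    moreover have "{d1, d2, z ! (f1 - 1), m, z ! f1} \<subseteq> V"
      using z_mem[of f1] z_mem[of "f1 - 1"] f1(2) d by auto
    ultimately show False
      using kite_freeD[OF kf] by blast
  next
    case 3
    then show False
      using kite_or_hole_of_neighbours[OF ch kf z _ d(1,2,4)] f1 f2 by auto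
  qed
qed

lemma triangle_over_induced_path:
  assumes ch: "chordal V E" and kf: "kite_free V E" and z: "induced_path V z"
    and d: "d1 \<in> V - set z" "d2 \<in> V - set z" "m \<in> V - set z" "E d1 d2" "E m d1" "E m d2"
    and m: "\<forall>x\<in>set z. \<not> E m x"
    and start: "E d1 (hd z)" "E d2 (hd z)" and stop: "\<not> E d1 (last z)" "\<not> E d2 (last z)"
  shows False
proof -
  have "z \<noteq> []"
    using z unfolding induced_path_def walk_in_def by blast
  obtain f1 where f1: "0 < f1" "f1 < length z" "\<forall>i<f1. E d1 (z ! i)" "\<not> E d1 (z ! f1)"
    using first_failing_index[of "E d1" z] start(1) stop(1) \<open>z \<noteq> []\<close> by blast
  obtain f2 where f2: "0 < f2" "f2 < length z" "\<forall>i<f2. E d2 (z ! i)" "\<not> E d2 (z ! f2)"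
    using first_failing_index[of "E d2" z] start(2) stop(2) \<open>z \<noteq> []\<close> by blast
  show False
  proof (cases "f2 \<le> f1")
    case True
    show False
      by (rule triangle_over_induced_path_ordered[OF ch kf z d m f1 f2 True])
  next
    case False
    show False
      by (rule triangle_over_induced_path_ordered[OF ch kf z d(2,1,3) sym[OF d(4)] d(6,5) m f2 f1])
        (use False in simp)
  qed
qed

section \<open>Minimal cutsets of kite-free chordal graphs\<close>

lemma minimal_cutset_far_vertex:
  assumes ch: "chordal V E" and mC: "minimal_cutset V C" and mD: "minimal_cutset V D"
    and c: "c \<in> C - D" and d: "d \<in> D - C"
  obtains l where "reachable (V - D) c l" "\<forall>x\<in>D - C. \<not> E x l"
proof -
  have CV: "C \<subseteq> V" and DV: "D \<subseteq> V"
    using mC mD minimal_cutset_cutset cutset_subset by blast+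
  have dV: "d \<in> V - C" and cV: "c \<in> V - D"
    using c d CV DV by auto
  obtain l where l: "l \<in> V - C" "\<not> reachable (V - C) d l"
    using cutset_unreachable_from[OF minimal_cutset_cutset[OF mC] dV] by blast
  have near: "reachable (V - C) d x" if x: "x \<in> D - C" for x
  proof (cases "x = d")
    case True
    then show ?thesis
      using reachable_refl[OF dV] by simp
  next
    case False
    moreover have "x \<in> V - C"
      using x DV by auto
    ultimately show ?thesis
      using reachable_edge[OF dV] chordal_minimal_cutset_clique[OF ch mD] x d by blast
  qed
  have far: "\<not> E x l" if x: "x \<in> D - C" for x
  proof
    assume "E x l"
    then have "reachable (V - C) x l"
      using reachable_edge[OF _ l(1)] x DV by blast
    then show False
      using l(2) reachable_trans[OF near[OF x]] by blast
  qed
  have "x \<in> V - D" if lx: "reachable (V - C) l x" for x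
  proof -
    have "x \<in> V - C"
      using reachable_in[OF lx] by blast
    moreover have "x \<notin> D"
    proof
      assume "x \<in> D"
      then have "reachable (V - C) d x"
        using near \<open>x \<in> V - C\<close> by blast
      then show False
        using l(2) reachable_trans[OF _ reachable_sym[OF lx]] by blast
    qed
    ultimately show ?thesis
      by blast
  qed
  moreover obtain n where n: "E c n" "reachable (V - C) l n"
    using minimal_cutset_full_component[OF mC _ l(1)] c by blast
  ultimately have "reachable (V - D) l n"
    using reachable_within_component[OF n(2)] by blast
  then have "reachable (V - D) l c"
    using reachable_step cV sym[OF n(1)] by blast
  then have "reachable (V - D) c l"
    by (rule reachable_sym)
  then show ?thesis
    using that far by blast
qed

lemma triangle_over_component:
  assumes ch: "chordal V E" and kf: "kite_free V E" and U: "U \<subseteq> V"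
    and d: "d1 \<in> V - U" "d2 \<in> V - U" "E d1 d2"
    and p0: "reachable U c p0" "E d1 p0" "E p0 d2"
    and l: "reachable U c l" "\<not> E d1 l" "\<not> E d2 l"
    and m: "m \<in> U" "\<not> reachable U c m" "E d1 m" "E m d2"
  shows False
proof -
  define B where "B = {x. reachable U c x}"
  have BU: "B \<subseteq> U"
    using reachable_in unfolding B_def by blast
  have "reachable B p0 l"
    unfolding B_def by (rule reachable_in_component[OF p0(1) l(1)])
  then obtain p where p: "walk_in B E p" "hd p \<in> {p0}" "last p \<in> {l}"
    unfolding reachable_def by auto
  obtain z where z: "induced_path B z" "hd z \<in> {p0}" "last z \<in> {l}"
    using shortest_walk_induced_path[OF p] by blast
  have zB: "set z \<subseteq> B"
    using z(1) unfolding induced_path_def walk_in_def by blast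
  have m_far: "\<not> E m x" if "x \<in> B" for x
  proof
    assume "E m x"
    then have "reachable U c m"
      using reachable_step[of U c x m] that m(1) sym unfolding B_def by blast
    then show False
      using m(2) by blast
  qed
  show False
  proof (rule triangle_over_induced_path[OF ch kf induced_path_mono[OF z(1)]])
    show "B \<subseteq> V"
      using BU U by blast
    show "d1 \<in> V - set z" "d2 \<in> V - set z"
      using d zB BU by auto
    show "m \<in> V - set z"
      using m(1,2) zB U unfolding B_def by auto
    show "\<forall>x\<in>set z. \<not> E m x"
      using m_far zB by blast
    show "E d1 (hd z)" "E d2 (hd z)" "\<not> E d1 (last z)" "\<not> E d2 (last z)"
      using z(2,3) p0(2) sym[OF p0(3)] l(2,3) by auto
    show "E d1 d2" "E m d1" "E m d2"
      using d(3) sym[OF m(3)] m(4) by auto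
  qed
qed

theorem chordal_kite_free_minimal_cutsets_close:
  assumes ch: "chordal V E" and kf: "kite_free V E"
    and mC: "minimal_cutset V C" and mD: "minimal_cutset V D"
  shows "card (D - C) \<le> 1"
proof (rule ccontr)
  assume two: "\<not> card (D - C) \<le> 1"
  then have "finite (D - C)"
    using card.infinite by force
  then have "\<exists>d1\<in>D - C. \<exists>d2\<in>D - C. d1 \<noteq> d2"
    using two card_le_Suc0_iff_eq[of "D - C"] by auto
  then obtain d1 d2 where d: "d1 \<in> D - C" "d2 \<in> D - C" "d1 \<noteq> d2"
    by blast
  have DV: "D \<subseteq> V"
    using mD minimal_cutset_cutset cutset_subset by blast
  have "\<not> C \<subseteq> D"
  proof
    assume "C \<subseteq> D"
    then have "C \<subset> D"
      using d(1) by blast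
    then show False
      using mD minimal_cutset_cutset[OF mC] unfolding minimal_cutset_def by blast
  qed
  then obtain c where c: "c \<in> C - D"
    by blast
  then have cV: "c \<in> V - D"
    using mC minimal_cutset_cutset cutset_subset by blast
  obtain l where l: "reachable (V - D) c l" "\<forall>x\<in>D - C. \<not> E x l"
    using minimal_cutset_far_vertex[OF ch mC mD c d(1)] by blast
  obtain p0 where p0: "reachable (V - D) c p0" "E d1 p0" "E p0 d2"
    using chordal_minimal_cutset_common_neighbour[OF ch mD _ _ d(3) cV] d by blast
  obtain m0 where m0: "m0 \<in> V - D" "\<not> reachable (V - D) c m0"
    using cutset_unreachable_from[OF minimal_cutset_cutset[OF mD] cV] by blast
  obtain m where m: "reachable (V - D) m0 m" "E d1 m" "E m d2"
    using chordal_minimal_cutset_common_neighbour[OF ch mD _ _ d(3) m0(1)] d by blast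
  have "\<not> reachable (V - D) c m"
    using m0(2) reachable_trans[OF _ reachable_sym[OF m(1)]] by blast
  moreover have "m \<in> V - D"
    using reachable_in[OF m(1)] by blast
  moreover have "E d1 d2"
    using chordal_minimal_cutset_clique[OF ch mD] d by blast
  ultimately show False
    using triangle_over_component[OF ch kf _ _ _ _ p0 l(1) _ _ _ _ m(2,3)] l(2) d DV by blast
qed

section \<open>Connected dominating sets\<close>

lemma connected_dominating_set_meets_cutset:
  assumes cds: "connected_dominating_set V E S" and X: "cutset V X"
  shows "X \<inter> S \<noteq> {}"
proof
  assume disj: "X \<inter> S = {}"
  have SV: "S \<subseteq> V" and dom: "\<forall>x\<in>V - S. \<exists>y\<in>S. E x y" and con: "connected_on S E"
    using cds unfolding connected_dominating_set_def dominating_set_def by auto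
  have SX: "S \<subseteq> V - X"
    using SV disj by blast
  obtain s where s: "s \<in> S"
    using con unfolding connected_on_def by blast
  have to_s: "reachable (V - X) y s" if "y \<in> S" for y
  proof -
    have "reachable S y s"
      using con s that unfolding connected_on_def reachable_def by blast
    then show ?thesis
      using reachable_mono SX by blast
  qed
  have all_to_s: "reachable (V - X) x s" if x: "x \<in> V - X" for x
  proof (cases "x \<in> S")
    case False
    then obtain y where y: "y \<in> S" "E x y"
      using dom x by blast
    then have "reachable (V - X) x y"
      using reachable_edge[OF x] SX by blast
    then show ?thesis
      using reachable_trans[OF _ to_s[OF y(1)]] by blast
  qed (use to_s in blast)
  obtain a b where ab: "a \<in> V - X" "b \<in> V - X" "\<not> reachable (V - X) a b"
    using X unfolding cutset_def by blast
  then show False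
    using reachable_trans[OF all_to_s[OF ab(1)] reachable_sym[OF all_to_s[OF ab(2)]]] by blast
qed

lemma not_connected_dominating_set_misses_cutset:
  assumes SV: "S \<subseteq> V" and not_cds: "\<not> connected_dominating_set V E S"
    and ab: "a \<in> V" "b \<in> V" "a \<noteq> b" "\<not> E a b"
  obtains X where "cutset V X" "X \<inter> S = {}"
proof (cases "S = {}")
  case True
  have "V - (V - {a, b}) = {a, b}"
    using ab by auto
  moreover have "\<not> reachable {a, b} a b"
    using ab(3,4) irrefl by (auto elim: reachable_has_neighbour)
  ultimately have "cutset V (V - {a, b})"
    unfolding cutset_def using ab by auto
  then show ?thesis
    using that True by blast
next
  case False
  then obtain s where s: "s \<in> S"
    by blast
  show ?thesis
  proof (cases "dominating_set V E S")
    case False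
    then obtain x where x: "x \<in> V - S" "\<forall>y\<in>S. \<not> E x y"
      using SV unfolding dominating_set_def by blast
    let ?X = "{y \<in> V. E x y}"
    have "x \<in> V - ?X" "s \<in> V - ?X"
      using x s SV irrefl by auto
    moreover have "\<not> reachable (V - ?X) x s"
      using x s by (auto elim: reachable_has_neighbour)
    ultimately have "cutset V ?X"
      unfolding cutset_def by blast
    moreover have "?X \<inter> S = {}"
      using x by auto
    ultimately show ?thesis
      using that by blast
  next
    case True
    then have "\<not> connected_on S E"
      using not_cds unfolding connected_dominating_set_def by blast
    then obtain a' b' where "a' \<in> S" "b' \<in> S" "\<not> reachable S a' b'"
      using s unfolding connected_on_def reachable_def by blast
    moreover have "V - (V - S) = S"
      using SV by blast
    ultimately have "cutset V (V - S)"
      unfolding cutset_def by auto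
    then show ?thesis
      using that by blast
  qed
qed

lemma cutset_contains_minimal_cutset:
  assumes fin: "finite V" and X: "cutset V X"
  obtains Y where "Y \<subseteq> X" "minimal_cutset V Y"
proof -
  let ?P = "\<lambda>Y. cutset V Y \<and> Y \<subseteq> X"
  obtain Y where Y: "?P Y" and least: "\<And>Z. ?P Z \<Longrightarrow> card Y \<le> card Z"
    using ex_has_least_nat[of ?P X card] X by blast
  have "Y \<subseteq> V"
    using Y cutset_subset by blast
  then have "finite Y"
    using fin finite_subset by blast
  have "minimal_cutset V Y"
    unfolding minimal_cutset_def
  proof (intro conjI allI impI notI)
    show "cutset V Y"
      using Y by blast
    fix Z
    assume Z: "Z \<subset> Y" "cutset V Z"
    then have "card Y \<le> card Z"
      using least Y by blast
    moreover have "card Z < card Y"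
      using psubset_card_mono[OF \<open>finite Y\<close> Z(1)] .
    ultimately show False
      by simp
  qed
  then show ?thesis
    using that Y by blast
qed

lemma connected_dominating_set_iff_meets_minimal_cutsets:
  assumes fin: "finite V" and SV: "S \<subseteq> V"
    and ab: "a \<in> V" "b \<in> V" "a \<noteq> b" "\<not> E a b"
  shows "connected_dominating_set V E S \<longleftrightarrow> (\<forall>X. minimal_cutset V X \<longrightarrow> X \<inter> S \<noteq> {})"
proof
  assume "connected_dominating_set V E S"
  then show "\<forall>X. minimal_cutset V X \<longrightarrow> X \<inter> S \<noteq> {}"
    using connected_dominating_set_meets_cutset minimal_cutset_cutset by blast
next
  assume meets: "\<forall>X. minimal_cutset V X \<longrightarrow> X \<inter> S \<noteq> {}"
  show "connected_dominating_set V E S"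
  proof (rule ccontr)
    assume "\<not> connected_dominating_set V E S"
    then obtain X where "cutset V X" "X \<inter> S = {}"
      using not_connected_dominating_set_misses_cutset[OF SV _ ab] by blast
    then obtain Y where "Y \<subseteq> X" "minimal_cutset V Y"
      using cutset_contains_minimal_cutset[OF fin] by blast
    then show False
      using meets \<open>X \<inter> S = {}\<close> by blast
  qed
qed

end

section \<open>Threshold weights\<close>

lemma connected_dominating_set_complete_iff:
  assumes complete: "\<forall>a\<in>V. \<forall>b\<in>V. a \<noteq> b \<longrightarrow> E a b" and SV: "S \<subseteq> V"
  shows "connected_dominating_set V E S \<longleftrightarrow> S \<noteq> {}"
proof
  assume "connected_dominating_set V E S"
  then show "S \<noteq> {}"
    unfolding connected_dominating_set_def connected_on_def by blast
next
  assume "S \<noteq> {}"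
  then obtain s where s: "s \<in> S"
    by blast
  have "E x s" if "x \<in> V - S" for x
  proof -
    have "x \<in> V" "s \<in> V" "x \<noteq> s"
      using that s SV by auto
    then show ?thesis
      using complete by blast
  qed
  then have "dominating_set V E S"
    using SV s unfolding dominating_set_def by blast
  moreover have "connected_on S E"
    unfolding connected_on_def
  proof (intro conjI ballI)
    fix x y
    assume xy: "x \<in> S" "y \<in> S"
    show "\<exists>p. walk_in S E p \<and> hd p = x \<and> last p = y"
    proof (cases "x = y")
      case True
      then show ?thesis
        using xy by (intro exI[of _ "[x]"]) simp
    next
      case False
      then have "E x y"
        using xy SV complete by blast
      then show ?thesis
        using xy by (intro exI[of _ "[x, y]"]) (simp add: walk_in_Cons_Cons)
    qed
  qed fact
  ultimately show "connected_dominating_set V E S"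
    unfolding connected_dominating_set_def by blast
qed

lemma sum_card_incidences:
  assumes "finite S" "finite M"
  shows "(\<Sum>v\<in>S. card {X \<in> M. v \<in> X}) = (\<Sum>X\<in>M. card (S \<inter> X))"
proof -
  have "card {X \<in> M. v \<in> X} = (\<Sum>X\<in>M. if v \<in> X then 1 else 0)" for v
    using sum.inter_filter[OF assms(2), of "\<lambda>_. 1::nat"] by simp
  moreover have "card (S \<inter> X) = (\<Sum>v\<in>S. if v \<in> X then 1 else 0)" for X
    using sum.inter_filter[OF assms(1), of "\<lambda>_. 1::nat" "\<lambda>v. v \<in> X"] by (simp add: Int_def)
  ultimately show ?thesis
    using sum.swap by simp
qed

lemma meets_all_iff_degree_sum:
  assumes M: "finite M" "\<And>X. X \<in> M \<Longrightarrow> finite X"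
    and close: "\<And>C X. C \<in> M \<Longrightarrow> X \<in> M \<Longrightarrow> card (X - C) \<le> 1" and S: "finite S"
  shows "card M \<le> (\<Sum>v\<in>S. card {X \<in> M. v \<in> X}) \<longleftrightarrow> (\<forall>X\<in>M. X \<inter> S \<noteq> {})"
  unfolding sum_card_incidences[OF S M(1)]
proof
  assume le: "card M \<le> (\<Sum>X\<in>M. card (S \<inter> X))"
  show "\<forall>X\<in>M. X \<inter> S \<noteq> {}"
  proof (rule ccontr)
    assume "\<not> (\<forall>X\<in>M. X \<inter> S \<noteq> {})"
    then obtain C where C: "C \<in> M" "C \<inter> S = {}"
      by blast
    have "card (S \<inter> X) \<le> card (X - C)" if "X \<in> M" for X
      using C(2) M(2)[OF that] by (intro card_mono) auto
    then have "(\<Sum>X\<in>M. card (S \<inter> X)) \<le> (\<Sum>X\<in>M. card (X - C))"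
      by (rule sum_mono)
    also have "\<dots> = (\<Sum>X\<in>M - {C}. card (X - C))"
      using sum.remove[OF M(1) C(1), of "\<lambda>X. card (X - C)"] by simp
    also have "\<dots> \<le> (\<Sum>X\<in>M - {C}. 1)"
      using close[OF C(1)] by (intro sum_mono) simp
    also have "\<dots> = card M - 1"
      using C(1) M(1) by simp
    also have "\<dots> < card M"
      using card_gt_0_iff[of M] C(1) M(1) by auto
    finally show False
      using le by simp
  qed
next
  assume "\<forall>X\<in>M. X \<inter> S \<noteq> {}"
  then have "1 \<le> card (S \<inter> X)" if "X \<in> M" for X
    using S that by (auto simp: Suc_le_eq card_gt_0_iff Int_commute)
  then have "(\<Sum>X\<in>M. 1) \<le> (\<Sum>X\<in>M. card (S \<inter> X))"
    by (rule sum_mono)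
  then show "card M \<le> (\<Sum>X\<in>M. card (S \<inter> X))"
    by simp
qed

context simple_adjacency
begin

lemma chordal_kite_free_threshold:
  assumes fin: "finite V" and ch: "chordal V E" and kf: "kite_free V E"
  shows "\<exists>(w :: 'a \<Rightarrow> real) (t :: real). (\<forall>x\<in>V. w x \<ge> 0) \<and> t \<ge> 0 \<and>
    (\<forall>S. S \<subseteq> V \<longrightarrow> ((\<Sum>x\<in>S. w x) \<ge> t \<longleftrightarrow> connected_dominating_set V E S))"
proof (cases "\<forall>a\<in>V. \<forall>b\<in>V. a \<noteq> b \<longrightarrow> E a b")
  case True
  have "(\<Sum>x\<in>S. 1 :: real) \<ge> 1 \<longleftrightarrow> connected_dominating_set V E S" if "S \<subseteq> V" for S
    using connected_dominating_set_complete_iff[OF True that] finite_subset[OF that fin]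
    by (simp add: Suc_le_eq card_gt_0_iff)
  then show ?thesis
    by (intro exI[of _ "\<lambda>_. 1"] exI[of _ 1]) simp
next
  case False
  then obtain a b where ab: "a \<in> V" "b \<in> V" "a \<noteq> b" "\<not> E a b"
    by blast
  define M where "M = {X. minimal_cutset V X}"
  have M_Pow: "M \<subseteq> Pow V"
    unfolding M_def using minimal_cutset_cutset cutset_subset by blast
  then have M: "finite M" "\<And>X. X \<in> M \<Longrightarrow> finite X"
    using fin finite_subset[OF M_Pow] finite_subset by blast+
  have "(\<Sum>v\<in>S. real (card {X \<in> M. v \<in> X})) \<ge> real (card M)
      \<longleftrightarrow> connected_dominating_set V E S" if SV: "S \<subseteq> V" for S
  proof -
    have "(\<Sum>v\<in>S. real (card {X \<in> M. v \<in> X})) \<ge> real (card M)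
        \<longleftrightarrow> (\<forall>X\<in>M. X \<inter> S \<noteq> {})"
      unfolding of_nat_sum[symmetric] of_nat_le_iff
      using chordal_kite_free_minimal_cutsets_close[OF ch kf] finite_subset[OF SV fin]
      by (intro meets_all_iff_degree_sum[OF M]) (auto simp: M_def)
    also have "\<dots> \<longleftrightarrow> connected_dominating_set V E S"
      using connected_dominating_set_iff_meets_minimal_cutsets[OF fin SV ab] by (simp add: M_def)
    finally show ?thesis .
  qed
  then show ?thesis
    by (intro exI[of _ "\<lambda>v. real (card {X \<in> M. v \<in> X})"] exI[of _ "real (card M)"]) simp
qed

end

section \<open>Heredity\<close>

lemma chordal_subset: "chordal V E \<Longrightarrow> U \<subseteq> V \<Longrightarrow> chordal U E"
  unfolding chordal_def induced_cycle_def by blast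

lemma kite_free_subset: "kite_free V E \<Longrightarrow> U \<subseteq> V \<Longrightarrow> kite_free U E"
  unfolding kite_free_def by blast

theorem mainTheorem9:
  fixes V :: "'a set" and E :: "'a \<Rightarrow> 'a \<Rightarrow> bool"
  assumes "simple_graph V E" and "chordal V E" and "kite_free V E"
  shows "hereditarily_connected_domishold V E"
proof -
  have fin: "finite V"
    using assms(1) unfolding simple_graph_def by blast
  interpret simple_adjacency E
    using assms(1) unfolding simple_graph_def by unfold_locales blast+
  show ?thesis
    unfolding hereditarily_connected_domishold_def connected_domishold_def
  proof (intro allI impI)
    fix U
    assume "U \<subseteq> V"
    then show "\<exists>(w :: 'a \<Rightarrow> real) t. (\<forall>x\<in>U. w x \<ge> 0) \<and> t \<ge> 0 \<and>
        (\<forall>S. S \<subseteq> U \<longrightarrow> ((\<Sum>x\<in>S. w x) \<ge> t \<longleftrightarrow> connected_dominating_set U E S))"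
      using chordal_kite_free_threshold finite_subset[OF _ fin]
        chordal_subset[OF assms(2)] kite_free_subset[OF assms(3)] by presburger
  qed
qed

end
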